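(* Let $G$ be a simple graph whose edges are colored red and blue, and let $C_1$ and $C_2$ be two vertex-disjoint alternating cycles in $G$. If there is a good pair of edges between $C_1$ and $C_2$, then $G$ contains an alternating cycle whose vertex set is exactly $V(C_1)\cup V(C_2)$.
   Context: An alternating cycle (path) in a 2-edge-colored graph is a cycle (path) in which any two consecutive edges have different colors. For a vertex $v$ on an alternating cycle $C$, $v^r$ (resp. $v^b$) denotes the neighbor of $v$ on $C$ such that the edge $vv^r$ of $C$ is red (resp. $vv^b$ is blue). Given two vertex-disjoint alternating cycles $C_1,C_2$ and an edge $vw\in E(G)$ with $v\in V(C_1)$, $w\in V(C_2)$: if $vw$ is red, the pair $vw, v^rw^r$ is a good pair of edges when $v^rw^r$ is an edge of $G$ colored red (here $v^r$ taken on $C_1$, $w^r$ on $C_2$); if $vw$ is blue, the pair $vw, v^bw^b$ is a good pair of edges when $v^bw^b$ is an edge of $G$ colored blue. "There is a good pair between $C_1$ and $C_2$" means some such good pair of edges exists. *)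

theory Defs
  imports Main
begin

datatype color = Red | Blue

definition simple_graph :: "('a \<Rightarrow> 'a \<Rightarrow> bool) \<Rightarrow> bool" where
  "simple_graph E \<longleftrightarrow> (\<forall>u v. E u v \<longrightarrow> E v u) \<and> (\<forall>v. \<not> E v v)"

definition edge_coloring :: "('a \<Rightarrow> 'a \<Rightarrow> bool) \<Rightarrow> ('a \<Rightarrow> 'a \<Rightarrow> color) \<Rightarrow> bool" where
  "edge_coloring E col \<longleftrightarrow> (\<forall>u v. E u v \<longrightarrow> col u v = col v u)"

definition is_cycle :: "('a \<Rightarrow> 'a \<Rightarrow> bool) \<Rightarrow> 'a list \<Rightarrow> bool" where
  "is_cycle E C \<longleftrightarrow> length C \<ge> 3 \<and> distinct C \<and>
     (\<forall>i < length C. E (C ! i) (C ! ((i + 1) mod length C)))"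

definition alt_cycle :: "('a \<Rightarrow> 'a \<Rightarrow> bool) \<Rightarrow> ('a \<Rightarrow> 'a \<Rightarrow> color) \<Rightarrow> 'a list \<Rightarrow> bool" where
  "alt_cycle E col C \<longleftrightarrow> is_cycle E C \<and>
     (\<forall>i < length C. col (C ! i) (C ! ((i + 1) mod length C))
        \<noteq> col (C ! ((i + 1) mod length C)) (C ! ((i + 2) mod length C)))"

definition cyc_nbr :: "'a list \<Rightarrow> 'a \<Rightarrow> 'a \<Rightarrow> bool" where
  "cyc_nbr C v u \<longleftrightarrow> (\<exists>i < length C.
     (C ! i = v \<and> C ! ((i + 1) mod length C) = u) \<or>
     (C ! i = u \<and> C ! ((i + 1) mod length C) = v))"

definition cyc_nbr_col :: "('a \<Rightarrow> 'a \<Rightarrow> color) \<Rightarrow> 'a list \<Rightarrow> 'a \<Rightarrow> color \<Rightarrow> 'a \<Rightarrow> bool" where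
  "cyc_nbr_col col C v c u \<longleftrightarrow> cyc_nbr C v u \<and> col v u = c"

definition good_pair :: "('a \<Rightarrow> 'a \<Rightarrow> bool) \<Rightarrow> ('a \<Rightarrow> 'a \<Rightarrow> color) \<Rightarrow> 'a list \<Rightarrow> 'a list \<Rightarrow> bool" where
  "good_pair E col C1 C2 \<longleftrightarrow> (\<exists>v w. v \<in> set C1 \<and> w \<in> set C2 \<and> E v w \<and>
     ((col v w = Red \<and> (\<exists>vr wr. cyc_nbr_col col C1 v Red vr \<and> cyc_nbr_col col C2 w Red wr
          \<and> E vr wr \<and> col vr wr = Red)) \<or>
      (col v w = Blue \<and> (\<exists>vb wb. cyc_nbr_col col C1 v Blue vb \<and> cyc_nbr_col col C2 w Blue wb
          \<and> E vb wb \<and> col vb wb = Blue))))"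

end

theory Submission
  imports Defs
begin

(* Let vw and v'w' be the good pair, both of colour c, with v' = v^c on C1 and w' = w^c on C2.
   After rotating and possibly reversing, C1 is a list from v' to v and C2 a list from w to w'.
   Then C1 @ C2 is the cycle obtained by exchanging the cycle edges vv' and ww' for vw and w'v'.
   All four edges have colour c, so every vertex still meets the same two colours and C1 @ C2
   is alternating.  Alternation of a cycle C is checked on the walk last C # C @ [hd C], on
   which rotation, reversal and this exchange of edges become simple list manipulations. *)

lemma all_less_shift_periodic:
  fixes P :: "nat \<Rightarrow> bool"
  assumes "0 < n" and periodic: "\<And>i. P (i mod n) = P i"
  shows "(\<forall>j<n. P (j + k)) \<longleftrightarrow> (\<forall>i<n. P i)"
proof
  assume shifted: "\<forall>j<n. P (j + k)"
  show "\<forall>i<n. P i"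
  proof (intro allI impI)
    fix i assume "i < n"
    define j where "j = (i + (n - k mod n)) mod n"
    have "j < n"
      using assms(1) by (simp add: j_def)
    have "(j + k) mod n = (i + (n - k mod n) + k mod n) mod n"
      unfolding j_def by (simp add: mod_add_left_eq mod_add_right_eq)
    also have "\<dots> = (i + n) mod n"
      using mod_less_divisor[OF assms(1), of k] by simp
    also have "\<dots> = i"
      using \<open>i < n\<close> by simp
    finally show "P i"
      using shifted \<open>j < n\<close> periodic by metis
  qed
qed (metis assms mod_less_divisor)

lemma hd_last_rotate_Suc:
  assumes "i < length C"
  shows "hd (rotate (Suc i) C) = C ! (Suc i mod length C)" and "last (rotate (Suc i) C) = C ! i"
proof -
  have "C \<noteq> []" using assms by auto
  then show "hd (rotate (Suc i) C) = C ! (Suc i mod length C)"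
    by (rule hd_rotate_conv_nth)
  have "Suc i + (length C - 1) = i + length C"
    using assms by simp
  with assms have "(Suc i + (length C - 1)) mod length C = i"
    by simp
  moreover have "last (rotate (Suc i) C) = rotate (Suc i) C ! (length C - 1)"
    using \<open>C \<noteq> []\<close> by (simp add: last_conv_nth del: rotate_Suc)
  ultimately show "last (rotate (Suc i) C) = C ! i"
    using \<open>C \<noteq> []\<close> by (simp add: nth_rotate del: rotate_Suc)
qed

fun alt_walk :: "('a \<Rightarrow> 'a \<Rightarrow> bool) \<Rightarrow> ('a \<Rightarrow> 'a \<Rightarrow> color) \<Rightarrow> 'a list \<Rightarrow> bool" where
  "alt_walk E col (x # y # z # zs) \<longleftrightarrow>
     E x y \<and> col x y \<noteq> col y z \<and> alt_walk E col (y # z # zs)"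
| "alt_walk E col [x, y] \<longleftrightarrow> E x y"
| "alt_walk E col _ \<longleftrightarrow> True"

lemma alt_walk_Cons_Cons:
  "alt_walk E col (x # y # ws) \<longleftrightarrow>
     E x y \<and> (ws \<noteq> [] \<longrightarrow> col x y \<noteq> col y (hd ws)) \<and> alt_walk E col (y # ws)"
  by (cases ws) auto

lemma alt_walk_append:
  "alt_walk E col (xs @ a # b # ys) \<longleftrightarrow> alt_walk E col (xs @ [a, b]) \<and> alt_walk E col (a # b # ys)"
  by (induction xs rule: induct_list012) (auto simp: alt_walk_Cons_Cons hd_append)

lemma alt_walk_snoc_change_last:
  assumes "alt_walk E col (xs @ [a, b])" "E a b'" "col a b' = col a b"
  shows "alt_walk E col (xs @ [a, b'])"
  using assms by (induction xs rule: induct_list012) (auto simp: alt_walk_Cons_Cons hd_append)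

lemma alt_walk_Cons_change_hd:
  assumes "alt_walk E col (b # a # xs)" "E b' a" "col b' a = col b a"
  shows "alt_walk E col (b' # a # xs)"
  using assms by (cases xs) auto

lemma alt_walk_conv_nth:
  "alt_walk E col xs \<longleftrightarrow>
     (\<forall>i < length xs - 1. E (xs ! i) (xs ! Suc i)) \<and>
     (\<forall>i < length xs - 2. col (xs ! i) (xs ! Suc i) \<noteq> col (xs ! Suc i) (xs ! Suc (Suc i)))"
  by (induction E col xs rule: alt_walk.induct) (auto simp: All_less_Suc2)

lemma alt_walk_change_ends:
  assumes "alt_walk E col (x # A @ [y])" "A \<noteq> []"
    and "E x' (hd A)" "col x' (hd A) = col x (hd A)"
    and "E (last A) y'" "col (last A) y' = col (last A) y"
  shows "alt_walk E col (x' # A @ [y'])"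
proof -
  have split_last: "x # A @ [z] = (x # butlast A) @ [last A, z]" for z
    using assms(2) by simp
  have split_hd: "x # A @ [z] = x # hd A # tl A @ [z]" for x z
    using assms(2) by simp
  have "alt_walk E col (x # A @ [y'])"
    using alt_walk_snoc_change_last[of E col "x # butlast A" "last A" y y'] assms(1,5,6)
    unfolding split_last by blast
  then show ?thesis
    using alt_walk_Cons_change_hd[of E col x "hd A"] assms(3,4) unfolding split_hd by blast
qed

lemma alt_walk_rev:
  assumes "symp E" "edge_coloring E col" "alt_walk E col xs"
  shows "alt_walk E col (rev xs)"
  using assms(3)
proof (induction xs rule: induct_list012)
  case (3 x y zs)
  have E_sym: "E a b \<Longrightarrow> E b a" and col_sym: "E a b \<Longrightarrow> col a b = col b a" for a b
    using assms(1,2) unfolding symp_def edge_coloring_def by blast+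
  have "E x y"
    using "3.prems" by (simp add: alt_walk_Cons_Cons)
  then have "E y x"
    by (rule E_sym)
  show ?case
  proof (cases zs)
    case Nil
    then show ?thesis using \<open>E y x\<close> by simp
  next
    case (Cons z zs')
    then have "E y z" "col x y \<noteq> col y z"
      using "3.prems" by (simp_all add: alt_walk_Cons_Cons)
    moreover have "col z y = col y z" "col y x = col x y"
      using col_sym[OF \<open>E y z\<close>] col_sym[OF \<open>E x y\<close>] by simp_all
    ultimately have "alt_walk E col [z, y, x]"
      using \<open>E y x\<close> E_sym by simp
    moreover have "alt_walk E col (rev zs' @ [z, y])"
      using "3.IH"(2) "3.prems" Cons by simp
    ultimately show ?thesis
      using Cons alt_walk_append[of E col "rev zs'" z y "[x]"] by simp
  qed
qed simp_all

(* Every pair of consecutive edges of C, including the pairs meeting the closing edge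
   from last C to hd C, is a pair of consecutive edges of this walk. *)
definition cycle_walk :: "'a list \<Rightarrow> 'a list" where
  "cycle_walk C = last C # C @ [hd C]"

lemma nth_cycle_walk:
  assumes "length C = Suc m" "j < length C + 2"
  shows "cycle_walk C ! j = C ! ((j + m) mod length C)"
proof -
  have "C \<noteq> []"
    using assms(1) by auto
  then show ?thesis
  proof (cases j)
    case 0
    then show ?thesis
      using assms(1) \<open>C \<noteq> []\<close> by (simp add: cycle_walk_def last_conv_nth)
  next
    case (Suc k)
    then have "(j + m) mod length C = k mod length C"
      using assms(1) by (metis add_Suc add_Suc_right mod_add_self2)
    then show ?thesis
      using assms Suc \<open>C \<noteq> []\<close>
      by (cases "k < length C") (auto simp: cycle_walk_def nth_append hd_conv_nth less_Suc_eq)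
  qed
qed

lemma alt_walk_cycle_walk_iff:
  assumes "C \<noteq> []"
  shows "alt_walk E col (cycle_walk C) \<longleftrightarrow>
    (\<forall>i < length C. E (C ! i) (C ! ((i + 1) mod length C)) \<and>
      col (C ! i) (C ! ((i + 1) mod length C))
        \<noteq> col (C ! ((i + 1) mod length C)) (C ! ((i + 2) mod length C)))"
proof -
  define n where "n = length C"
  obtain m where n: "n = Suc m"
    using assms by (cases C) (simp_all add: n_def)
  then have "0 < n"
    by simp
  define c where "c i = C ! (i mod n)" for i
  define corner where
    "corner i \<longleftrightarrow> E (c i) (c (i + 1)) \<and> col (c i) (c (i + 1)) \<noteq> col (c (i + 1)) (c (i + 2))" for i
  have corner_mod: "corner (i mod n) = corner i" for i
    by (simp add: corner_def c_def mod_Suc_eq mod_Suc_Suc_eq)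
  define d where "d j = cycle_walk C ! j" for j
  have d: "d j = c (j + m)" if "j < n + 2" for j
    using nth_cycle_walk[of C m j] that n by (simp add: d_def c_def n_def)
  have "c (n + m) = c m" "c (n + Suc m) = c (Suc m)"
    unfolding c_def by (metis mod_add_self1)+
  then have wrap: "E (d n) (d (Suc n)) \<longleftrightarrow> E (d 0) (d 1)"
    by (simp add: d add.commute)
  have corner_d: "corner (j + m) \<longleftrightarrow>
      E (d j) (d (Suc j)) \<and> col (d j) (d (Suc j)) \<noteq> col (d (Suc j)) (d (Suc (Suc j)))"
    if "j < n" for j
    using that by (simp add: corner_def d)
  have "alt_walk E col (cycle_walk C) \<longleftrightarrow> (\<forall>j<Suc n. E (d j) (d (Suc j))) \<and>
      (\<forall>j<n. col (d j) (d (Suc j)) \<noteq> col (d (Suc j)) (d (Suc (Suc j))))"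
    unfolding alt_walk_conv_nth d_def by (simp add: cycle_walk_def n_def)
  also have "\<dots> \<longleftrightarrow> (\<forall>j<n. E (d j) (d (Suc j)) \<and>
      col (d j) (d (Suc j)) \<noteq> col (d (Suc j)) (d (Suc (Suc j))))"
    unfolding All_less_Suc wrap using \<open>0 < n\<close> by fastforce
  also have "\<dots> \<longleftrightarrow> (\<forall>j<n. corner (j + m))"
    using corner_d by simp
  also have "\<dots> \<longleftrightarrow> (\<forall>i<n. corner i)"
    using all_less_shift_periodic[of n corner m] \<open>0 < n\<close> corner_mod by blast
  finally show ?thesis
    by (simp add: corner_def c_def n_def)
qed

lemma alt_cycle_iff_alt_walk:
  "alt_cycle E col C \<longleftrightarrow> 3 \<le> length C \<and> distinct C \<and> alt_walk E col (cycle_walk C)"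
proof (cases "C = []")
  case False
  then show ?thesis
    unfolding alt_cycle_def is_cycle_def alt_walk_cycle_walk_iff[OF False] by blast
qed (simp add: alt_cycle_def is_cycle_def)

lemma alt_cycle_rotate1:
  assumes "alt_cycle E col C"
  shows "alt_cycle E col (rotate1 C)"
proof -
  have len: "3 \<le> length C" and dist: "distinct C" and walk: "alt_walk E col (cycle_walk C)"
    using assms unfolding alt_cycle_iff_alt_walk by auto
  obtain x y ys where C: "C = x # y # ys"
    using len by (metis Suc_le_length_iff numeral_3_eq_3)
  define z where "z = last (y # ys)"
  have walk_C: "alt_walk E col (z # x # y # ys @ [x])"
    using walk by (simp add: C z_def cycle_walk_def)
  have core: "x # y # ys @ [x] = (x # butlast (y # ys)) @ [z, x]"
    unfolding z_def
    by (metis append_Cons append_assoc append_butlast_last_id append_Nil list.distinct(1))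
  have "cycle_walk (rotate1 C) = (x # butlast (y # ys)) @ z # x # [y]"
    by (simp add: C z_def cycle_walk_def)
  moreover have "alt_walk E col ((x # butlast (y # ys)) @ [z, x])"
    using walk_C by (subst core[symmetric]) simp
  moreover have "alt_walk E col [z, x, y]"
    using walk_C by (simp add: alt_walk_Cons_Cons)
  ultimately have "alt_walk E col (cycle_walk (rotate1 C))"
    using alt_walk_append by metis
  then show ?thesis
    using len dist unfolding alt_cycle_iff_alt_walk by simp
qed

lemma alt_cycle_rotate:
  "alt_cycle E col C \<Longrightarrow> alt_cycle E col (rotate k C)"
  by (induction k) (simp_all add: alt_cycle_rotate1)

lemma alt_cycle_rev:
  assumes "symp E" "edge_coloring E col" "alt_cycle E col C"
  shows "alt_cycle E col (rev C)"
proof -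
  have "C \<noteq> []"
    using assms(3) by (auto simp: alt_cycle_iff_alt_walk)
  then have "cycle_walk (rev C) = rev (cycle_walk C)"
    by (simp add: cycle_walk_def hd_rev last_rev)
  then show ?thesis
    using assms alt_walk_rev[OF assms(1,2)] by (simp add: alt_cycle_iff_alt_walk)
qed

lemma alt_cycle_with_closing_edge:
  assumes "symp E" "edge_coloring E col" "alt_cycle E col C" "cyc_nbr C v u"
  shows "\<exists>D. alt_cycle E col D \<and> set D = set C \<and> hd D = u \<and> last D = v"
proof -
  obtain i where i: "i < length C" and
    "C ! i = v \<and> C ! (Suc i mod length C) = u \<or> C ! i = u \<and> C ! (Suc i mod length C) = v"
    using assms(4) unfolding cyc_nbr_def by auto
  moreover have "alt_cycle E col (rotate (Suc i) C)" "alt_cycle E col (rev (rotate (Suc i) C))"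
    using alt_cycle_rotate alt_cycle_rev assms(1-3) by blast+
  moreover have "rotate (Suc i) C \<noteq> []"
    using i by auto
  ultimately show ?thesis
    using hd_last_rotate_Suc[OF i] by (metis set_rotate set_rev hd_rev last_rev)
qed

lemma alt_cycle_append:
  assumes A: "alt_cycle E col A" and B: "alt_cycle E col B" and "set A \<inter> set B = {}"
    and "col (last A) (hd A) = c" "col (last B) (hd B) = c"
    and "E (last A) (hd B)" "col (last A) (hd B) = c"
    and "E (last B) (hd A)" "col (last B) (hd A) = c"
  shows "alt_cycle E col (A @ B)"
proof -
  have "A \<noteq> []" "B \<noteq> []" "3 \<le> length A"
    using A B by (auto simp: alt_cycle_iff_alt_walk)
  have "alt_walk E col (last A # A @ [hd A])" "alt_walk E col (last B # B @ [hd B])"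
    using A B by (simp_all add: alt_cycle_iff_alt_walk cycle_walk_def)
  then have walk_A: "alt_walk E col (last B # A @ [hd B])"
    and walk_B: "alt_walk E col (last A # B @ [hd A])"
    using assms(4-) \<open>A \<noteq> []\<close> \<open>B \<noteq> []\<close> alt_walk_change_ends by metis+
  have "last B # A @ [hd B] = (last B # butlast A) @ [last A, hd B]"
    using \<open>A \<noteq> []\<close> by simp
  moreover have "last A # B @ [hd A] = last A # hd B # tl B @ [hd A]"
    using \<open>B \<noteq> []\<close> by simp
  moreover have "cycle_walk (A @ B) = (last B # butlast A) @ last A # hd B # tl B @ [hd A]"
    using \<open>A \<noteq> []\<close> \<open>B \<noteq> []\<close> by (simp add: cycle_walk_def)
  ultimately have "alt_walk E col (cycle_walk (A @ B))"
    using walk_A walk_B alt_walk_append by metis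
  moreover have "distinct (A @ B)"
    using A B assms(3) by (simp add: alt_cycle_iff_alt_walk)
  ultimately show ?thesis
    using \<open>3 \<le> length A\<close> by (simp add: alt_cycle_iff_alt_walk)
qed

lemma cyc_nbr_sym: "cyc_nbr C v u \<Longrightarrow> cyc_nbr C u v"
  unfolding cyc_nbr_def by blast

lemma is_cycle_cyc_nbr_edge:
  assumes "symp E" "is_cycle E C" "cyc_nbr C v u"
  shows "E v u"
  using assms unfolding is_cycle_def cyc_nbr_def symp_def by blast

lemma alt_cycle_merge:
  assumes "symp E" and coloring: "edge_coloring E col"
    and C1: "alt_cycle E col C1" and C2: "alt_cycle E col C2" and "set C1 \<inter> set C2 = {}"
    and v: "cyc_nbr_col col C1 v c v'" and w: "cyc_nbr_col col C2 w c w'"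
    and "E v w" "col v w = c" "E v' w'" "col v' w' = c"
  shows "\<exists>C. alt_cycle E col C \<and> set C = set C1 \<union> set C2"
proof -
  have "cyc_nbr C1 v v'" "col v v' = c" "cyc_nbr C2 w w'" "col w w' = c"
    using v w unfolding cyc_nbr_col_def by auto
  obtain D1 where D1: "alt_cycle E col D1" "set D1 = set C1" "hd D1 = v'" "last D1 = v"
    using alt_cycle_with_closing_edge[OF \<open>symp E\<close> coloring C1 \<open>cyc_nbr C1 v v'\<close>] by blast
  obtain D2 where D2: "alt_cycle E col D2" "set D2 = set C2" "hd D2 = w" "last D2 = w'"
    using alt_cycle_with_closing_edge[OF \<open>symp E\<close> coloring C2 cyc_nbr_sym[OF \<open>cyc_nbr C2 w w'\<close>]]
    by blast
  have "E w w'"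
    using is_cycle_cyc_nbr_edge[OF \<open>symp E\<close> _ \<open>cyc_nbr C2 w w'\<close>] C2 unfolding alt_cycle_def by blast
  then have "col w' w = c"
    using \<open>col w w' = c\<close> coloring unfolding edge_coloring_def by metis
  moreover have "E w' v'"
    using \<open>symp E\<close> \<open>E v' w'\<close> by (rule sympD)
  moreover have "col w' v' = c"
    using \<open>E v' w'\<close> \<open>col v' w' = c\<close> coloring unfolding edge_coloring_def by metis
  ultimately have "alt_cycle E col (D1 @ D2)"
    using alt_cycle_append[OF D1(1) D2(1), of c] D1 D2 assms(5,8,9) \<open>col v v' = c\<close> by simp
  then show ?thesis
    using D1(2) D2(2) by auto
qed

theorem proposition3p1:
  fixes E :: "'a \<Rightarrow> 'a \<Rightarrow> bool" and col :: "'a \<Rightarrow> 'a \<Rightarrow> color"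
    and C1 C2 :: "'a list"
  assumes "simple_graph E" and "edge_coloring E col"
    and "alt_cycle E col C1" and "alt_cycle E col C2"
    and "set C1 \<inter> set C2 = {}"
    and "good_pair E col C1 C2"
  shows "\<exists>C. alt_cycle E col C \<and> set C = set C1 \<union> set C2"
proof -
  have "symp E"
    using assms(1) by (simp add: simple_graph_def symp_def)
  obtain v w v' w' where "E v w" "cyc_nbr_col col C1 v (col v w) v'"
    "cyc_nbr_col col C2 w (col v w) w'" "E v' w'" "col v' w' = col v w"
    using assms(6) unfolding good_pair_def by auto
  then show ?thesis
    using alt_cycle_merge[OF \<open>symp E\<close> assms(2-5)] by blast
qed

end
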